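(* With $r^2=x^2+p^2$, let $W_0=\frac1\pi e^{-r^2}$, $W_b=\frac1\pi e^{-r^2}r^2$, $W_c=\frac1\pi e^{-r^2}(r^2-1)^2$, $W_d=\frac1\pi e^{-r^2}\tfrac12 r^4$, and for $t\in[0,1]$, $V_t=\frac{t+1}{2\pi}e^{-r^2}\big(r^2-1+\sqrt{(1-t)/(1+t)}\big)^2$, all as functions on $\mathbb{R}^2$. Then $W_0\succ W_b$, $W_0\succ W_c$, $W_0\succ W_d$, and $W_0\succ V_t$ for every $t\in[0,1]$.
   Context: Majorization on $\mathbb{R}^2$ (Lebesgue measure): $f\succ g$ means $\int f=\int g$ and $\int[f-t]_+\ge\int[g-t]_+$ for all $t\ge0$, where $[z]_+=\max(z,0)$. *)

theory Defs
  imports "HOL-Analysis.Analysis"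
begin

definition majorizes :: "(real \<times> real \<Rightarrow> real) \<Rightarrow> (real \<times> real \<Rightarrow> real) \<Rightarrow> bool" where
  "majorizes f g \<longleftrightarrow>
     integrable lborel f \<and> integrable lborel g \<and>
     (\<integral>z. f z \<partial>lborel) = (\<integral>z. g z \<partial>lborel) \<and>
     (\<forall>t::real. t \<ge> 0 \<longrightarrow>
        (\<integral>z. max (f z - t) 0 \<partial>lborel) \<ge> (\<integral>z. max (g z - t) 0 \<partial>lborel))"

definition rsq :: "real \<times> real \<Rightarrow> real" where
  "rsq z = (fst z)\<^sup>2 + (snd z)\<^sup>2"

definition W0 :: "real \<times> real \<Rightarrow> real" where
  "W0 z = 1 / pi * exp (- rsq z)"

definition Wb :: "real \<times> real \<Rightarrow> real" where
  "Wb z = 1 / pi * exp (- rsq z) * rsq z"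

definition Wc :: "real \<times> real \<Rightarrow> real" where
  "Wc z = 1 / pi * exp (- rsq z) * (rsq z - 1)\<^sup>2"

definition Wd :: "real \<times> real \<Rightarrow> real" where
  "Wd z = 1 / pi * exp (- rsq z) * (1/2 * (rsq z)\<^sup>2)"

definition Vt :: "real \<Rightarrow> real \<times> real \<Rightarrow> real" where
  "Vt t z = (t + 1) / (2 * pi) * exp (- rsq z) *
            (rsq z - 1 + sqrt ((1 - t) / (1 + t)))\<^sup>2"

end

theory Submission
  imports Defs
begin

text \<open>All functions involved are radial, and the squared radius pushes Lebesgue measure on the
  plane forward to \<open>\<pi>\<close> times Lebesgue measure on \<open>[0, \<infinity>)\<close>; so it suffices to compare profiles
  \<open>g\<close> on the half-line. Each profile comes with its tail \<open>T\<close> (\<open>T' = - g\<close>, \<open>T(\<infinity>) = 0\<close>,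
  \<open>T(0) = 1/\<pi>\<close>) and satisfies \<open>g \<le> T\<close>; the profile \<open>e\<^sup>-\<^sup>s/\<pi>\<close> of \<open>W0\<close> is its own tail.
  With \<open>w(y) = [1 - \<tau>/y]\<^sub>+\<close> and its primitive \<open>\<Phi>\<close>, one has \<open>[g - \<tau>]\<^sub>+ \<le> g w(T)\<close> pointwise
  (with equality when \<open>g = T\<close>), while the chain rule gives \<open>\<integral> g w(T) = \<Phi>(T(0)) = \<Phi>(1/\<pi>)\<close>,
  independently of \<open>g\<close>. The profiles at hand are \<open>e\<^sup>-\<^sup>s q(s)/\<pi>\<close> with \<open>q\<close> quadratic; their tails
  have the same shape, and \<open>g \<le> T\<close> becomes two sign conditions on the coefficients of \<open>q\<close>.\<close>

lemma has_real_derivative_glue: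
  fixes f g h :: "real \<Rightarrow> real"
  assumes g: "(g has_real_derivative D) (at x)" and h: "(h has_real_derivative D) (at x)"
    and left: "\<And>y. y \<le> x \<Longrightarrow> f y = g y" and right: "\<And>y. x \<le> y \<Longrightarrow> f y = h y"
  shows "(f has_real_derivative D) (at x)"
proof -
  have gx: "f x = g x" and hx: "f x = h x"
    using left[of x] right[of x] by simp_all
  have "((\<lambda>y. (f y - f x) / (y - x)) \<longlongrightarrow> D) (at_left x)"
  proof (rule Lim_transform_eventually)
    show "((\<lambda>y. (g y - g x) / (y - x)) \<longlongrightarrow> D) (at_left x)"
      using g by (auto simp: has_field_derivative_iff intro: filterlim_mono at_within_le_at)
    show "\<forall>\<^sub>F y in at_left x. (g y - g x) / (y - x) = (f y - f x) / (y - x)"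
      by (auto simp: eventually_at_filter gx left)
  qed
  moreover have "((\<lambda>y. (f y - f x) / (y - x)) \<longlongrightarrow> D) (at_right x)"
  proof (rule Lim_transform_eventually)
    show "((\<lambda>y. (h y - h x) / (y - x)) \<longlongrightarrow> D) (at_right x)"
      using h by (auto simp: has_field_derivative_iff intro: filterlim_mono at_within_le_at)
    show "\<forall>\<^sub>F y in at_right x. (h y - h x) / (y - x) = (f y - f x) / (y - x)"
      by (auto simp: eventually_at_filter hx right)
  qed
  ultimately show ?thesis
    by (simp add: has_field_derivative_iff filterlim_split_at)
qed

text \<open>The weight is cut off at \<open>y \<le> \<tau>\<close> (not written as \<open>max (1 - \<tau> / y) 0\<close>) so that it also
  vanishes for \<open>y \<le> 0\<close> and its primitive \<open>excess_potential\<close> is differentiable everywhere.\<close>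

definition excess_weight :: "real \<Rightarrow> real \<Rightarrow> real" where
  "excess_weight \<tau> y = (if y \<le> \<tau> then 0 else 1 - \<tau> / y)"

definition excess_potential :: "real \<Rightarrow> real \<Rightarrow> real" where
  "excess_potential \<tau> y = (if y \<le> \<tau> then 0 else y - \<tau> - \<tau> * ln (y / \<tau>))"

lemma excess_weight_nonneg: "0 \<le> \<tau> \<Longrightarrow> 0 \<le> excess_weight \<tau> y"
  by (simp add: excess_weight_def)

lemma excess_potential_nonneg:
  assumes "0 < \<tau>"
  shows "0 \<le> excess_potential \<tau> y"
proof (cases "y \<le> \<tau>")
  case False
  then have "ln (y / \<tau>) \<le> y / \<tau> - 1"
    using assms by (intro ln_le_minus_one) simp
  then have "\<tau> * ln (y / \<tau>) \<le> y - \<tau>"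
    using assms mult_left_mono[of "ln (y / \<tau>)" "y / \<tau> - 1" \<tau>] by (simp add: right_diff_distrib)
  then show ?thesis using False by (simp add: excess_potential_def)
qed (simp add: excess_potential_def)

lemma excess_potential_has_derivative:
  assumes "0 < \<tau>"
  shows "(excess_potential \<tau> has_real_derivative excess_weight \<tau> y) (at y)"
proof -
  define h where "h y = y - \<tau> - \<tau> * ln (y / \<tau>)" for y
  have h: "(h has_real_derivative 1 - \<tau> / y) (at y)" if "0 < y" for y
    unfolding h_def using that assms by (auto intro!: derivative_eq_intros simp: field_simps)
  consider "y < \<tau>" | "y = \<tau>" | "\<tau> < y" by linarith
  then show ?thesis
  proof cases
    case 1
    have "((\<lambda>_. 0) has_real_derivative 0) (at y)" by simp
    then have "(excess_potential \<tau> has_real_derivative 0) (at y)"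
      by (rule has_field_derivative_transform_within_open[of _ _ _ "{..<\<tau>}"])
        (use 1 in \<open>auto simp: excess_potential_def\<close>)
    then show ?thesis using 1 by (simp add: excess_weight_def)
  next
    case 2
    have "(h has_real_derivative 0) (at y)" using h[of y] assms 2 by simp
    then have "(excess_potential \<tau> has_real_derivative 0) (at y)"
      by (rule has_real_derivative_glue[OF DERIV_const])
        (auto simp: excess_potential_def h_def 2)
    then show ?thesis using 2 by (simp add: excess_weight_def)
  next
    case 3
    have "(h has_real_derivative 1 - \<tau> / y) (at y)" using h[of y] assms 3 by simp
    then have "(excess_potential \<tau> has_real_derivative 1 - \<tau> / y) (at y)"
      by (rule has_field_derivative_transform_within_open[of _ _ _ "{\<tau><..}"])
        (use 3 in \<open>auto simp: excess_potential_def h_def\<close>)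
    then show ?thesis using 3 by (simp add: excess_weight_def)
  qed
qed

lemma pos_part_le_mult_excess_weight:
  assumes "0 < \<tau>" "0 \<le> a" "a \<le> b"
  shows "max (a - \<tau>) 0 \<le> a * excess_weight \<tau> b"
proof (cases "b \<le> \<tau>")
  case False
  then have "a * \<tau> \<le> b * \<tau>" and "a * \<tau> \<le> a * b"
    using assms by (simp_all add: mult_right_mono mult_left_mono)
  then have "a * \<tau> / b \<le> \<tau>" and "a * \<tau> / b \<le> a"
    using False assms by (simp_all add: divide_le_eq mult.commute)
  then show ?thesis
    using False by (simp add: excess_weight_def right_diff_distrib)
qed (use assms in \<open>simp add: excess_weight_def\<close>)

lemma mult_excess_weight_self:
  assumes "0 < \<tau>"
  shows "a * excess_weight \<tau> a = max (a - \<tau>) 0"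
  using assms by (simp add: excess_weight_def right_diff_distrib)

locale tail_integral =
  fixes g T :: "real \<Rightarrow> real"
  assumes measurable_g[measurable]: "g \<in> borel_measurable borel"
    and has_derivative_T: "\<And>s. (T has_real_derivative - g s) (at s)"
    and nonneg_g: "\<And>s. 0 \<le> s \<Longrightarrow> 0 \<le> g s"
    and T_tendsto_0: "(T \<longlongrightarrow> 0) at_top"
begin

lemma measurable_T[measurable]: "T \<in> borel_measurable borel"
  by (meson DERIV_isCont borel_measurable_continuous_onI continuous_at_imp_continuous_on
      has_derivative_T)

lemma T_nonneg:
  assumes "0 \<le> s"
  shows "0 \<le> T s"
proof (rule tendsto_upperbound[OF T_tendsto_0])
  have "T x \<le> T s" if "s \<le> x" for x
    using that assms nonneg_g has_derivative_T
    by (intro DERIV_nonpos_imp_nonincreasing[of s x T]) (auto intro!: exI[of _ "- g _"])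
  then show "\<forall>\<^sub>F x in at_top. T x \<le> T s"
    by (auto simp: eventually_at_top_linorder)
qed simp

lemma has_bochner_integral_g:
  "has_bochner_integral lborel (\<lambda>s. indicator {0..} s * g s) (T 0)"
proof (rule has_bochner_integral_nn_integral)
  have "(\<integral>\<^sup>+s. ennreal (g s) * indicator {0..} s \<partial>lborel) = ennreal (0 - - T 0)"
    using has_derivative_T nonneg_g by (intro nn_integral_FTC_atLeast[where F="\<lambda>s. - T s"])
      (auto intro!: derivative_eq_intros tendsto_minus[OF T_tendsto_0, simplified])
  also have "(\<integral>\<^sup>+s. ennreal (g s) * indicator {0..} s \<partial>lborel)
      = (\<integral>\<^sup>+s. ennreal (indicator {0..} s * g s) \<partial>lborel)"
    by (intro nn_integral_cong) (simp add: indicator_def)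
  finally show "(\<integral>\<^sup>+s. ennreal (indicator {0..} s * g s) \<partial>lborel) = ennreal (T 0)"
    by simp
qed (auto simp: indicator_def nonneg_g T_nonneg)

lemma nn_integral_excess_weight:
  assumes "0 < \<tau>"
  shows "(\<integral>\<^sup>+s. ennreal (g s * excess_weight \<tau> (T s)) * indicator {0..} s \<partial>lborel)
    = ennreal (excess_potential \<tau> (T 0))"
proof -
  have "\<forall>\<^sub>F s in at_top. T s < \<tau>"
    using order_tendstoD(2)[OF T_tendsto_0 assms] .
  then have "\<forall>\<^sub>F s in at_top. - excess_potential \<tau> (T s) = 0"
    by eventually_elim (simp add: excess_potential_def)
  then have lim: "((\<lambda>s. - excess_potential \<tau> (T s)) \<longlongrightarrow> 0) at_top"
    by (rule tendsto_eventually)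
  have "(\<integral>\<^sup>+s. ennreal (g s * excess_weight \<tau> (T s)) * indicator {0..} s \<partial>lborel)
      = ennreal (0 - - excess_potential \<tau> (T 0))"
  proof (rule nn_integral_FTC_atLeast[OF _ _ _ lim])
    show "(\<lambda>s. g s * excess_weight \<tau> (T s)) \<in> borel_measurable borel"
      unfolding excess_weight_def by measurable
    fix s :: real assume "0 \<le> s"
    show "((\<lambda>s. - excess_potential \<tau> (T s)) has_real_derivative g s * excess_weight \<tau> (T s)) (at s)"
      using DERIV_chain2[OF excess_potential_has_derivative[OF assms] has_derivative_T]
      by (auto intro!: derivative_eq_intros)
    show "0 \<le> g s * excess_weight \<tau> (T s)"
      using \<open>0 \<le> s\<close> assms by (simp add: nonneg_g excess_weight_nonneg)
  qed
  then show ?thesis by simp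
qed

lemma integral_pos_part_le:
  assumes "0 < \<tau>" and dominated: "\<And>s. 0 \<le> s \<Longrightarrow> g s \<le> T s"
  shows "(\<integral>s. indicator {0..} s * max (g s - \<tau>) 0 \<partial>lborel) \<le> excess_potential \<tau> (T 0)"
proof -
  have "(\<integral>\<^sup>+s. ennreal (indicator {0..} s * max (g s - \<tau>) 0) \<partial>lborel)
      \<le> (\<integral>\<^sup>+s. ennreal (g s * excess_weight \<tau> (T s)) * indicator {0..} s \<partial>lborel)"
    using assms by (intro nn_integral_mono)
      (auto simp: indicator_def nonneg_g intro!: ennreal_leI pos_part_le_mult_excess_weight)
  also have "\<dots> = ennreal (excess_potential \<tau> (T 0))"
    by (rule nn_integral_excess_weight[OF assms(1)])
  finally show ?thesis
    by (subst integral_eq_nn_integral) (auto simp: indicator_def enn2real_leI excess_potential_nonneg[OF assms(1)])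
qed

lemma integral_pos_part_eq:
  assumes "0 < \<tau>" and "\<And>s. 0 \<le> s \<Longrightarrow> g s = T s"
  shows "(\<integral>s. indicator {0..} s * max (g s - \<tau>) 0 \<partial>lborel) = excess_potential \<tau> (T 0)"
proof -
  have "(\<integral>\<^sup>+s. ennreal (indicator {0..} s * max (g s - \<tau>) 0) \<partial>lborel)
      = (\<integral>\<^sup>+s. ennreal (g s * excess_weight \<tau> (T s)) * indicator {0..} s \<partial>lborel)"
    using assms by (intro nn_integral_cong) (simp add: indicator_def mult_excess_weight_self)
  also have "\<dots> = ennreal (excess_potential \<tau> (T 0))"
    by (rule nn_integral_excess_weight[OF assms(1)])
  finally show ?thesis
    by (subst integral_eq_nn_integral) (auto simp: indicator_def excess_potential_nonneg[OF assms(1)])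
qed

end

lemma measurable_rsq[measurable]: "rsq \<in> borel_measurable borel"
  unfolding rsq_def by (intro borel_measurable_continuous_onI continuous_intros)

lemma rsq_nonneg: "0 \<le> rsq z"
  unfolding rsq_def by simp

lemma rsq_le_iff_mem_cball: "0 \<le> a \<Longrightarrow> rsq z \<le> a \<longleftrightarrow> z \<in> cball 0 (sqrt a)"
  by (cases z) (simp add: rsq_def dist_norm norm_Pair real_le_rsqrt real_sqrt_le_iff)

lemma emeasure_distr_rsq_atMost:
  "emeasure (distr lborel borel rsq) {..a} = ennreal (pi * max a 0)"
proof (cases "a < 0")
  case True
  then have "rsq -` {..a} = {}"
    using rsq_nonneg by (meson order.trans not_le vimage_eq atMost_iff equals0I)
  then show ?thesis using True by (simp add: emeasure_distr)
next
  case False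
  then have "rsq -` {..a} = cball 0 (sqrt a)"
    using rsq_le_iff_mem_cball by auto
  then have "emeasure (distr lborel borel rsq) {..a} = emeasure lborel (cball (0::real\<times>real) (sqrt a))"
    by (simp add: emeasure_distr)
  also have "\<dots> = ennreal (pi * max a 0)"
    using False by (simp add: emeasure_cball unit_ball_vol_2)
  finally show ?thesis .
qed

lemma emeasure_half_line_density_atMost:
  "emeasure (density lborel (\<lambda>s. pi * indicator {0..} s)) {..a} = ennreal (pi * max a 0)"
proof -
  have "emeasure (density lborel (\<lambda>s. pi * indicator {0..} s)) {..a}
      = (\<integral>\<^sup>+s. ennreal pi * indicator {0..a} s \<partial>lborel)"
    by (subst emeasure_density) (auto intro!: nn_integral_cong simp: indicator_def ennreal_mult)
  also have "\<dots> = ennreal (pi * max a 0)"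
    by (cases "a < 0") (auto simp: nn_integral_cmult ennreal_mult)
  finally show ?thesis .
qed

lemma distr_rsq_lborel: "distr lborel borel rsq = density lborel (\<lambda>s. pi * indicator {0..} s)"
proof (rule measure_eqI_generator_eq[where E="range atMost" and \<Omega>=UNIV and A="\<lambda>n. {..real n}"])
  have "sets (borel::real measure) = sigma_sets UNIV (range atMost)"
    by (subst borel_eq_atMost) (simp add: sets_measure_of)
  then show "sets (distr lborel borel rsq) = sigma_sets UNIV (range atMost)"
    and "sets (density lborel (\<lambda>s::real. pi * indicator {0..} s)) = sigma_sets UNIV (range atMost)"
    by simp_all
  show "Int_stable (range atMost :: real set set)"
    by (auto simp: Int_stable_def intro!: exI[of _ "min _ _"])
  show "\<And>X. X \<in> range atMost \<Longrightarrow> emeasure (distr lborel borel rsq) X =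
      emeasure (density lborel (\<lambda>s. pi * indicator {0..} s)) X"
    using emeasure_distr_rsq_atMost emeasure_half_line_density_atMost by auto
  show "(\<Union>n. {..real n}) = UNIV"
    by (auto intro: real_arch_simple)
  show "\<And>n. emeasure (distr lborel borel rsq) {..real n} \<noteq> \<infinity>"
    using emeasure_distr_rsq_atMost by simp
qed auto

lemma integrable_radial_iff:
  fixes H :: "real \<Rightarrow> real"
  assumes [measurable]: "H \<in> borel_measurable borel"
  shows "integrable lborel (\<lambda>z. H (rsq z)) \<longleftrightarrow> integrable lborel (\<lambda>s. indicator {0..} s * H s)"
proof -
  have "integrable lborel (\<lambda>z. H (rsq z)) \<longleftrightarrow> integrable (distr lborel borel rsq) H"
    by (simp add: integrable_distr_eq)
  also have "\<dots> \<longleftrightarrow> integrable lborel (\<lambda>s. pi * (indicator {0..} s * H s))"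
    unfolding distr_rsq_lborel by (subst integrable_density) (auto simp: mult.assoc)
  finally show ?thesis by simp
qed

lemma integral_radial:
  fixes H :: "real \<Rightarrow> real"
  assumes [measurable]: "H \<in> borel_measurable borel"
  shows "(\<integral>z. H (rsq z) \<partial>lborel) = pi * (\<integral>s. indicator {0..} s * H s \<partial>lborel)"
proof -
  have "(\<integral>z. H (rsq z) \<partial>lborel) = integral\<^sup>L (distr lborel borel rsq) H"
    by (rule integral_distr[symmetric]) measurable
  also have "\<dots> = (\<integral>s. pi * (indicator {0..} s * H s) \<partial>lborel)"
    unfolding distr_rsq_lborel by (subst integral_density) (auto simp: mult.assoc)
  finally show ?thesis by simp
qed

lemma (in tail_integral) has_bochner_integral_radial:
  "has_bochner_integral lborel (\<lambda>z. g (rsq z)) (pi * T 0)"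
  using has_bochner_integral_g integrable_radial_iff[of g] integral_radial[of g]
  by (simp add: has_bochner_integral_iff)

lemma tendsto_exp_minus_at_top: "((\<lambda>s::real. exp (- s)) \<longlongrightarrow> 0) at_top"
  using filterlim_compose[OF exp_at_bot filterlim_uminus_at_bot_at_top] by simp

lemma tail_integral_exp:
  assumes "0 \<le> c"
  shows "tail_integral (\<lambda>s. c * exp (- s)) (\<lambda>s. c * exp (- s))"
proof
  show "((\<lambda>s. c * exp (- s)) \<longlongrightarrow> 0) at_top"
    by (rule tendsto_mult_right_zero[OF tendsto_exp_minus_at_top])
qed (use assms in \<open>auto intro!: derivative_eq_intros\<close>)

lemma majorizes_W0_radial:
  assumes "tail_integral g T" and T0: "T 0 = 1 / pi"
    and dominated: "\<And>s. 0 \<le> s \<Longrightarrow> g s \<le> T s"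
  shows "majorizes W0 (\<lambda>z. g (rsq z))"
proof -
  interpret g: tail_integral g T by fact
  define E where "E s = 1 / pi * exp (- s)" for s
  interpret E: tail_integral E E
    unfolding E_def by (rule tail_integral_exp) simp
  have W0: "W0 = (\<lambda>z. E (rsq z))"
    by (simp add: fun_eq_iff W0_def E_def)
  have E0: "E 0 = 1 / pi"
    by (simp add: E_def)
  have "max (g (rsq z) - t) 0 = g (rsq z)" if "t = 0" for t z
    using that g.nonneg_g[OF rsq_nonneg] by simp
  moreover have "max (E (rsq z) - t) 0 = E (rsq z)" if "t = 0" for t z
    using that E.nonneg_g[OF rsq_nonneg] by simp
  moreover have "(\<integral>z. max (g (rsq z) - t) 0 \<partial>lborel) \<le> (\<integral>z. max (E (rsq z) - t) 0 \<partial>lborel)"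
    if "0 < t" for t
  proof -
    have "(\<integral>z. max (g (rsq z) - t) 0 \<partial>lborel)
        = pi * (\<integral>s. indicator {0..} s * max (g s - t) 0 \<partial>lborel)"
      by (rule integral_radial) measurable
    also have "\<dots> \<le> pi * excess_potential t (1 / pi)"
      using g.integral_pos_part_le[OF that dominated] T0 by simp
    also have "\<dots> = pi * (\<integral>s. indicator {0..} s * max (E s - t) 0 \<partial>lborel)"
      using E.integral_pos_part_eq[OF that] E0 by simp
    also have "\<dots> = (\<integral>z. max (E (rsq z) - t) 0 \<partial>lborel)"
      by (rule integral_radial[symmetric]) measurable
    finally show ?thesis .
  qed
  ultimately show ?thesis
    using g.has_bochner_integral_radial E.has_bochner_integral_radial T0 E0
    unfolding majorizes_def W0 by (auto simp: has_bochner_integral_iff le_less)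
qed

definition exp_quad :: "real \<Rightarrow> real \<Rightarrow> real \<Rightarrow> real \<Rightarrow> real" where
  "exp_quad a0 a1 a2 s = 1 / pi * exp (- s) * (a0 + a1 * s + a2 * s\<^sup>2)"

lemma measurable_exp_quad[measurable]: "exp_quad a0 a1 a2 \<in> borel_measurable borel"
  unfolding exp_quad_def by measurable

lemma exp_quad_has_derivative:
  "(exp_quad b0 b1 b2 has_real_derivative - exp_quad (b0 - b1) (b1 - 2 * b2) b2 s) (at s)"
  unfolding exp_quad_def
  by (auto intro!: derivative_eq_intros simp: power2_eq_square) (simp add: field_simps)

lemma exp_quad_tendsto_0: "(exp_quad b0 b1 b2 \<longlongrightarrow> 0) at_top"
proof -
  have "exp_quad b0 b1 b2
      = (\<lambda>s. 1 / pi * (b0 * exp (- s) + b1 * (s ^ 1 / exp s) + b2 * (s ^ 2 / exp s)))"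
    by (simp add: fun_eq_iff exp_quad_def exp_minus field_simps)
  moreover have "((\<lambda>s. 1 / pi * (b0 * exp (- s) + b1 * (s ^ 1 / exp s) + b2 * (s ^ 2 / exp s)))
      \<longlongrightarrow> 1 / pi * (b0 * 0 + b1 * 0 + b2 * 0)) at_top"
    by (intro tendsto_intros tendsto_power_div_exp_0 tendsto_exp_minus_at_top)
  ultimately show ?thesis
    by simp
qed

lemma tail_integral_exp_quad:
  assumes "a0 + a1 + 2 * a2 = 1" and "\<And>s. 0 \<le> s \<Longrightarrow> 0 \<le> a0 + a1 * s + a2 * s\<^sup>2"
  shows "tail_integral (exp_quad a0 a1 a2) (exp_quad 1 (a1 + 2 * a2) a2)"
proof
  have "1 - (a1 + 2 * a2) = a0"
    using assms(1) by simp
  then show "(exp_quad 1 (a1 + 2 * a2) a2 has_real_derivative - exp_quad a0 a1 a2 s) (at s)" for s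
    using exp_quad_has_derivative[of 1 "a1 + 2 * a2" a2 s] by simp
qed (use assms(2) in \<open>simp_all add: exp_quad_def exp_quad_tendsto_0\<close>)

lemma majorizes_W0_exp_quad:
  assumes "a0 + a1 + 2 * a2 = 1" and "\<And>s. 0 \<le> s \<Longrightarrow> 0 \<le> a0 + a1 * s + a2 * s\<^sup>2"
    and "0 \<le> a1 + 2 * a2" and "0 \<le> a2"
  shows "majorizes W0 (\<lambda>z. exp_quad a0 a1 a2 (rsq z))"
proof (rule majorizes_W0_radial[OF tail_integral_exp_quad[OF assms(1,2)]])
  show "exp_quad 1 (a1 + 2 * a2) a2 0 = 1 / pi"
    by (simp add: exp_quad_def)
  fix s :: real assume "0 \<le> s"
  have a0: "a0 = 1 - a1 - 2 * a2"
    using assms(1) by simp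
  have "exp_quad 1 (a1 + 2 * a2) a2 s - exp_quad a0 a1 a2 s
      = 1 / pi * exp (- s) * (a1 + 2 * a2 + 2 * a2 * s)"
    unfolding exp_quad_def a0 by (simp add: algebra_simps)
  also have "\<dots> \<ge> 0"
    using assms(3,4) \<open>0 \<le> s\<close> by simp
  finally show "exp_quad a0 a1 a2 s \<le> exp_quad 1 (a1 + 2 * a2) a2 s"
    by simp
qed

lemma majorizes_W0_Wb: "majorizes W0 Wb"
proof -
  have eq: "Wb = (\<lambda>z. exp_quad 0 1 0 (rsq z))"
    by (simp add: fun_eq_iff Wb_def exp_quad_def)
  show ?thesis
    unfolding eq by (rule majorizes_W0_exp_quad) simp_all
qed

lemma majorizes_W0_Wc: "majorizes W0 Wc"
proof -
  have eq: "Wc = (\<lambda>z. exp_quad 1 (- 2) 1 (rsq z))"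
    by (simp add: fun_eq_iff Wc_def exp_quad_def power2_eq_square algebra_simps)
  have "1 + - 2 * s + 1 * s\<^sup>2 = (s - 1)\<^sup>2" for s :: real
    by (simp add: power2_eq_square algebra_simps)
  then show ?thesis
    unfolding eq by (intro majorizes_W0_exp_quad) simp_all
qed

lemma majorizes_W0_Wd: "majorizes W0 Wd"
proof -
  have eq: "Wd = (\<lambda>z. exp_quad 0 0 (1 / 2) (rsq z))"
    by (simp add: fun_eq_iff Wd_def exp_quad_def)
  show ?thesis
    unfolding eq by (rule majorizes_W0_exp_quad) simp_all
qed

lemma majorizes_W0_Vt:
  assumes "0 \<le> t" and "t \<le> 1"
  shows "majorizes W0 (Vt t)"
proof -
  define k where "k = sqrt ((1 - t) / (1 + t))"
  have "0 \<le> k" and k2: "k\<^sup>2 = (1 - t) / (1 + t)"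
    using assms by (simp_all add: k_def)
  have eq: "Vt t = (\<lambda>z. exp_quad ((t + 1) / 2 * (k - 1)\<^sup>2) ((t + 1) * (k - 1)) ((t + 1) / 2) (rsq z))"
    by (simp add: fun_eq_iff Vt_def exp_quad_def k_def[symmetric] power2_eq_square field_simps)
  show ?thesis
    unfolding eq
  proof (rule majorizes_W0_exp_quad)
    have "(t + 1) / 2 * (k - 1)\<^sup>2 + (t + 1) * (k - 1) + 2 * ((t + 1) / 2) = (t + 1) / 2 * (k\<^sup>2 + 1)"
      by (simp add: power2_eq_square field_simps)
    then show "(t + 1) / 2 * (k - 1)\<^sup>2 + (t + 1) * (k - 1) + 2 * ((t + 1) / 2) = 1"
      using assms by (simp add: k2 field_simps)
    have "(t + 1) * (k - 1) + 2 * ((t + 1) / 2) = (t + 1) * k"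
      by (simp add: field_simps)
    then show "0 \<le> (t + 1) * (k - 1) + 2 * ((t + 1) / 2)"
      using assms \<open>0 \<le> k\<close> by simp
    show "0 \<le> (t + 1) / 2"
      using assms by simp
    fix s :: real
    have "(t + 1) / 2 * (k - 1)\<^sup>2 + (t + 1) * (k - 1) * s + (t + 1) / 2 * s\<^sup>2
        = (t + 1) / 2 * (s - 1 + k)\<^sup>2"
      by (simp add: power2_eq_square field_simps)
    moreover have "0 \<le> (t + 1) / 2 * (s - 1 + k)\<^sup>2"
      using assms by simp
    ultimately show "0 \<le> (t + 1) / 2 * (k - 1)\<^sup>2 + (t + 1) * (k - 1) * s + (t + 1) / 2 * s\<^sup>2"
      by linarith
  qed
qed

theorem mainTheorem10:
  shows "majorizes W0 Wb \<and> majorizes W0 Wc \<and> majorizes W0 Wd \<and>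
         (\<forall>t::real. 0 \<le> t \<and> t \<le> 1 \<longrightarrow> majorizes W0 (Vt t))"
  using majorizes_W0_Wb majorizes_W0_Wc majorizes_W0_Wd majorizes_W0_Vt by blast

end
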